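(* Let $\mathcal P_0=\{p\in\mathbb C[z]:p(0)=0\}$. Let $\pi$ be a non-zero submultiplicative seminorm on $\mathcal P_0$ and let $\{p_k\}_{k\in\mathbb N}$ be a sequence in $\mathcal P_0$ such that $\{p_k:k\in\mathbb N\}$ is dense in $\mathcal P_0$ with respect to any seminorm on $\mathcal P_0$. Assume that there exist sequences $\{n_k\}_{k\in\mathbb N}$ and $\{m_k\}_{k\in\mathbb N}$ of positive integers and a sequence $\{c_k\}_{k\in\mathbb N}$ of complex numbers such that $\pi(c_kz^{n_k}-p_k)\to0$ and $\pi(z(1+z)^{m_k}-p_k)\to0$ as $k\to\infty$. Then $\pi$ is a norm and the completion $A$ of $(\mathcal P_0,\pi)$ is an infinite dimensional chaotic Banach algebra with $z$ as a chaotic element.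
   Context: A function $\pi$ on an algebra is submultiplicative if $\pi(ab)\le\pi(a)\pi(b)$. A Banach algebra is a complex algebra, possibly without unit, with a complete submultiplicative norm; $A^{\#}=A\oplus\mathrm{span}\{\mathbf 1\}$ is its unitalization. An element $a\in A$ is chaotic if both $\{wa^n:w\in\mathbb C,\ n\in\mathbb N\}$ and $\{(\mathbf 1+a)^na:n\in\mathbb N\}$ are dense in $A$; $A$ is chaotic if it has a chaotic element. $\mathbb N$ denotes the positive integers. *)

theory Defs
  imports "HOL-Analysis.Analysis" "HOL-Computational_Algebra.Polynomial"
begin

definition P0 :: "complex poly set" where
  "P0 = {p. poly p 0 = 0}"

(* seminorms on P_0 (values outside P_0 are irrelevant) *)
definition seminorm_on_P0 :: "(complex poly \<Rightarrow> real) \<Rightarrow> bool" where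
  "seminorm_on_P0 \<sigma> \<longleftrightarrow>
     (\<forall>p\<in>P0. 0 \<le> \<sigma> p) \<and>
     (\<forall>p\<in>P0. \<forall>q\<in>P0. \<sigma> (p + q) \<le> \<sigma> p + \<sigma> q) \<and>
     (\<forall>c. \<forall>p\<in>P0. \<sigma> (smult c p) = cmod c * \<sigma> p)"

definition submultiplicative_on_P0 :: "(complex poly \<Rightarrow> real) \<Rightarrow> bool" where
  "submultiplicative_on_P0 \<sigma> \<longleftrightarrow> (\<forall>p\<in>P0. \<forall>q\<in>P0. \<sigma> (p * q) \<le> \<sigma> p * \<sigma> q)"

definition norm_on_P0 :: "(complex poly \<Rightarrow> real) \<Rightarrow> bool" where
  "norm_on_P0 \<sigma> \<longleftrightarrow> seminorm_on_P0 \<sigma> \<and> (\<forall>p\<in>P0. \<sigma> p = 0 \<longrightarrow> p = 0)"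

(* A complex Banach algebra (possibly without unit): a real Banach algebra 'a
   (associative, submultiplicative complete norm) together with a complex scalar
   multiplication sc extending the real one, compatible with the algebra and the norm. *)
definition complex_scalar ::
  "(complex \<Rightarrow> 'a::{real_normed_algebra,banach} \<Rightarrow> 'a) \<Rightarrow> bool" where
  "complex_scalar sc \<longleftrightarrow>
     (\<forall>r x. sc (complex_of_real r) x = scaleR r x) \<and>
     (\<forall>a b x. sc (a + b) x = sc a x + sc b x) \<and>
     (\<forall>a x y. sc a (x + y) = sc a x + sc a y) \<and>
     (\<forall>a b x. sc a (sc b x) = sc (a * b) x) \<and>
     (\<forall>a x y. sc a (x * y) = sc a x * y) \<and>
     (\<forall>a x y. sc a (x * y) = x * sc a y) \<and>
     (\<forall>a x. norm (sc a x) = cmod a * norm x)"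

definition cspan :: "(complex \<Rightarrow> 'a::{real_normed_algebra,banach} \<Rightarrow> 'a) \<Rightarrow> 'a set \<Rightarrow> 'a set" where
  "cspan sc S = {(\<Sum>x\<in>F. sc (u x) x) | F u. finite F \<and> F \<subseteq> S}"

definition infinite_dimensional ::
  "(complex \<Rightarrow> 'a::{real_normed_algebra,banach} \<Rightarrow> 'a) \<Rightarrow> bool" where
  "infinite_dimensional sc \<longleftrightarrow> \<not> (\<exists>S. finite S \<and> cspan sc S = UNIV)"

(* ppow a n = a^(n+1) in a possibly non-unital algebra *)
definition ppow :: "'a::real_normed_algebra \<Rightarrow> nat \<Rightarrow> 'a" where
  "ppow a n = (((*) a) ^^ n) a"

(* uorb a n = (1 + a)^n a, computed in the unitalization A^# and lying in A:
   (1+a)^0 a = a,  (1+a)^(n+1) a = (1+a)^n a + a (1+a)^n a *)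
definition uorb :: "'a::real_normed_algebra \<Rightarrow> nat \<Rightarrow> 'a" where
  "uorb a n = ((\<lambda>x. x + a * x) ^^ n) a"

definition chaotic_element ::
  "(complex \<Rightarrow> 'a::{real_normed_algebra,banach} \<Rightarrow> 'a) \<Rightarrow> 'a \<Rightarrow> bool" where
  "chaotic_element sc a \<longleftrightarrow>
     closure {sc w (ppow a n) | w n. True} = UNIV \<and>
     closure {uorb a n | n. n \<ge> 1} = UNIV"

definition chaotic_algebra ::
  "(complex \<Rightarrow> 'a::{real_normed_algebra,banach} \<Rightarrow> 'a) \<Rightarrow> bool" where
  "chaotic_algebra sc \<longleftrightarrow> (\<exists>a. chaotic_element sc a)"

(* j : (P_0, \<pi>) \<rightarrow> A is an isometric complex-algebra homomorphism with dense range,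
   i.e. A (with sc) is a completion of (P_0, \<pi>) *)
definition is_completion ::
  "(complex poly \<Rightarrow> real) \<Rightarrow> (complex \<Rightarrow> 'a::{real_normed_algebra,banach} \<Rightarrow> 'a)
     \<Rightarrow> (complex poly \<Rightarrow> 'a) \<Rightarrow> bool" where
  "is_completion \<pi> sc j \<longleftrightarrow>
     complex_scalar sc \<and>
     (\<forall>p\<in>P0. \<forall>q\<in>P0. j (p + q) = j p + j q) \<and>
     (\<forall>p\<in>P0. \<forall>q\<in>P0. j (p * q) = j p * j q) \<and>
     (\<forall>c. \<forall>p\<in>P0. j (smult c p) = sc c (j p)) \<and>
     (\<forall>p\<in>P0. norm (j p) = \<pi> p) \<and>
     closure (j ` P0) = UNIV"

end

theory Submission
  imports Defs "HOL-Computational_Algebra.Fundamental_Theorem_Algebra"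
begin

text \<open>
  Every element of \<open>P\<^sub>0\<close> is approximated simultaneously by \<open>c\<^sub>k z^(n\<^sub>k)\<close> and by
  \<open>z(1+z)^(m\<^sub>k)\<close>: one only has to pass to a tail of the sequence \<open>p\<^sub>k\<close>, which is
  possible because \<open>p\<^sub>k\<close> is dense for every seminorm, in particular for \<open>\<pi>\<close> plus a
  large multiple of a coefficient functional of high degree.

  The kernel of \<open>\<pi>\<close> is an ideal of \<open>\<complex>[z]\<close>. If it were non-zero, a non-zero element of
  minimal degree would either have a root \<open>\<xi> \<noteq> 0\<close> or be a multiple of \<open>z\<^sup>a\<close> with
  \<open>a \<ge> 2\<close>. Then evaluation at \<open>\<xi>\<close>, respectively the first coefficient, is a
  \<open>\<pi>\<close>-continuous functional mapping the orbit \<open>z(1+z)\<^sup>m\<close> onto a geometric sequence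
  \<open>v \<mu>\<^sup>m\<close>, which is not dense in \<open>\<complex>\<close>; so the orbit would not be \<open>\<pi>\<close>-dense.
  Hence \<open>\<pi>\<close> is a norm, the powers of \<open>z\<close> stay independent in the completion, and the two
  approximations become density of the two orbits of \<open>z\<close> in the completion.
\<close>

lemma P0_add [simp]: "p \<in> P0 \<Longrightarrow> q \<in> P0 \<Longrightarrow> p + q \<in> P0"
  and P0_diff [simp]: "p \<in> P0 \<Longrightarrow> q \<in> P0 \<Longrightarrow> p - q \<in> P0"
  and P0_uminus [simp]: "p \<in> P0 \<Longrightarrow> - p \<in> P0"
  and P0_mult_left [simp]: "q \<in> P0 \<Longrightarrow> g * q \<in> P0"
  and P0_mult_right [simp]: "q \<in> P0 \<Longrightarrow> q * g \<in> P0"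
  and P0_smult [simp]: "p \<in> P0 \<Longrightarrow> smult a p \<in> P0"
  and P0_zero [simp]: "0 \<in> P0"
  and P0_pCons_0 [simp]: "pCons 0 p \<in> P0"
  and P0_monom [simp]: "1 \<le> N \<Longrightarrow> monom a N \<in> P0"
  and P0_pX_power [simp]: "1 \<le> N \<Longrightarrow> [:0, 1:] ^ N \<in> P0"
  by (simp_all add: P0_def poly_monom)

lemma P0_sum: "(\<And>i. i \<in> I \<Longrightarrow> f i \<in> P0) \<Longrightarrow> (\<Sum>i\<in>I. f i) \<in> P0"
  by (simp add: P0_def poly_sum)

section \<open>Seminorms on \<open>P\<^sub>0\<close>\<close>

context
  fixes \<sigma> :: "complex poly \<Rightarrow> real"
  assumes seminorm: "seminorm_on_P0 \<sigma>"
begin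

lemma seminorm_nonneg: "f \<in> P0 \<Longrightarrow> 0 \<le> \<sigma> f"
  using seminorm by (simp add: seminorm_on_P0_def)

lemma seminorm_add: "f \<in> P0 \<Longrightarrow> g \<in> P0 \<Longrightarrow> \<sigma> (f + g) \<le> \<sigma> f + \<sigma> g"
  using seminorm by (simp add: seminorm_on_P0_def)

lemma seminorm_smult: "f \<in> P0 \<Longrightarrow> \<sigma> (smult a f) = cmod a * \<sigma> f"
  using seminorm by (simp add: seminorm_on_P0_def)

lemma seminorm_minus: "f \<in> P0 \<Longrightarrow> \<sigma> (- f) = \<sigma> f"
  using seminorm_smult[of f "-1"] by simp

lemma seminorm_diff: "f \<in> P0 \<Longrightarrow> g \<in> P0 \<Longrightarrow> \<sigma> (f - g) \<le> \<sigma> f + \<sigma> g"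
  using seminorm_add[of f "- g"] seminorm_minus[of g] by simp

lemma seminorm_diff_commute: "f \<in> P0 \<Longrightarrow> g \<in> P0 \<Longrightarrow> \<sigma> (f - g) = \<sigma> (g - f)"
  using seminorm_minus[of "g - f"] by simp

lemma seminorm_diff_triangle:
  "f \<in> P0 \<Longrightarrow> g \<in> P0 \<Longrightarrow> h \<in> P0 \<Longrightarrow> \<sigma> (f - g) \<le> \<sigma> (f - h) + \<sigma> (h - g)"
  using seminorm_add[of "f - h" "h - g"] by simp

lemma seminorm_plus_coeff:
  assumes "0 \<le> C"
  shows "seminorm_on_P0 (\<lambda>f. \<sigma> f + C * cmod (coeff f N))"
  unfolding seminorm_on_P0_def
proof (intro conjI ballI allI)
  fix f g assume "f \<in> P0" "g \<in> P0"
  have "C * cmod (coeff (f + g) N) \<le> C * (cmod (coeff f N) + cmod (coeff g N))"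
    using assms by (intro mult_left_mono) (simp_all add: norm_triangle_ineq)
  with seminorm_add[OF \<open>f \<in> P0\<close> \<open>g \<in> P0\<close>]
  show "\<sigma> (f + g) + C * cmod (coeff (f + g) N)
          \<le> \<sigma> f + C * cmod (coeff f N) + (\<sigma> g + C * cmod (coeff g N))"
    by (simp add: distrib_left)
qed (use assms seminorm_nonneg seminorm_smult in \<open>simp_all add: norm_mult algebra_simps\<close>)

end

lemma seminorm_kernel_mult:
  assumes seminorm: "seminorm_on_P0 \<pi>" and submult: "submultiplicative_on_P0 \<pi>"
    and "q \<in> P0" and "\<pi> q = 0"
  shows "\<pi> (g * q) = 0"
proof -
  define g' where "g' = g - [:coeff g 0:]"
  have "g' \<in> P0" by (simp add: P0_def g'_def poly_0_coeff_0)
  have "\<pi> (g' * q) \<le> \<pi> g' * \<pi> q"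
    using submult \<open>g' \<in> P0\<close> \<open>q \<in> P0\<close> by (simp add: submultiplicative_on_P0_def)
  moreover have "g * q = smult (coeff g 0) q + g' * q"
    by (simp add: g'_def ring_distribs)
  then have "\<pi> (g * q) \<le> \<pi> (smult (coeff g 0) q) + \<pi> (g' * q)"
    using seminorm_add[OF seminorm] \<open>g' \<in> P0\<close> \<open>q \<in> P0\<close> by simp
  ultimately show ?thesis
    using assms seminorm_nonneg[OF seminorm, of "g * q"] seminorm_smult[OF seminorm]
    by simp
qed

section \<open>Passing to a tail of a universally dense sequence\<close>

lemma universally_dense_tail:
  fixes p :: "nat \<Rightarrow> complex poly"
  assumes seminorm: "seminorm_on_P0 \<pi>"
    and pP0: "\<And>k. p k \<in> P0"
    and dense: "\<And>\<sigma> q \<epsilon>. seminorm_on_P0 \<sigma> \<Longrightarrow> q \<in> P0 \<Longrightarrow> \<epsilon> > 0 \<Longrightarrow>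
                   \<exists>k. \<sigma> (q - p k) < \<epsilon>"
    and "q \<in> P0" and "\<epsilon> > 0"
  shows "\<exists>k\<ge>K. \<pi> (q - p k) < \<epsilon>"
proof -
  define N where "N = Suc (degree q + (\<Sum>k<K. degree (p k)))"
  have "1 \<le> N" by (simp add: N_def)
  have "coeff q N = 0" by (rule coeff_eq_0) (simp add: N_def)
  have coeff_p_N: "coeff (p k) N = 0" if "k < K" for k
  proof (rule coeff_eq_0)
    have "degree (p k) \<le> (\<Sum>k<K. degree (p k))"
      using that by (intro member_le_sum) simp_all
    then show "N > degree (p k)" by (simp add: N_def)
  qed
  define M where "M = \<pi> (monom 1 N)"
  have "0 \<le> M" unfolding M_def using seminorm_nonneg[OF seminorm] \<open>1 \<le> N\<close> by simp
  \<comment> \<open>perturb \<open>q\<close> by a small multiple of \<open>z\<^sup>N\<close>, which the first \<open>K\<close> terms of \<open>p\<close>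
      cannot match under a strong penalty on the \<open>N\<close>-th coefficient\<close>
  define \<delta> where "\<delta> = \<epsilon> / (2 * (M + 1))"
  have "\<delta> > 0" using \<open>\<epsilon> > 0\<close> \<open>0 \<le> M\<close> by (simp add: \<delta>_def)
  define q' where "q' = q + monom (complex_of_real \<delta>) N"
  have "q' \<in> P0" using \<open>q \<in> P0\<close> \<open>1 \<le> N\<close> by (simp add: q'_def)
  define \<sigma> where "\<sigma> = (\<lambda>f. \<pi> f + (\<epsilon> / \<delta>) * cmod (coeff f N))"
  have "seminorm_on_P0 \<sigma>"
    unfolding \<sigma>_def using \<open>\<epsilon> > 0\<close> \<open>\<delta> > 0\<close> by (intro seminorm_plus_coeff[OF seminorm]) simp
  then obtain k where k: "\<sigma> (q' - p k) < \<epsilon> / 2"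
    using dense[OF _ \<open>q' \<in> P0\<close>, of \<sigma> "\<epsilon> / 2"] \<open>\<epsilon> > 0\<close> by auto
  have \<pi>_le_\<sigma>: "\<pi> (q' - p k) \<le> \<sigma> (q' - p k)"
    using \<open>\<epsilon> > 0\<close> \<open>\<delta> > 0\<close> by (simp add: \<sigma>_def)
  have "K \<le> k"
  proof (rule ccontr)
    assume "\<not> K \<le> k"
    then have "coeff (q' - p k) N = complex_of_real \<delta>"
      using \<open>coeff q N = 0\<close> coeff_p_N by (simp add: q'_def)
    then have "\<sigma> (q' - p k) \<ge> \<epsilon>"
      using \<open>\<delta> > 0\<close> seminorm_nonneg[OF seminorm, of "q' - p k"] \<open>q' \<in> P0\<close> pP0
      by (simp add: \<sigma>_def)
    with k \<open>\<epsilon> > 0\<close> show False by simp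
  qed
  have "q - q' = - smult (complex_of_real \<delta>) (monom 1 N)" by (simp add: q'_def smult_monom)
  then have "\<pi> (q - q') = cmod (complex_of_real \<delta>) * M"
    unfolding M_def using \<open>1 \<le> N\<close>
    by (simp only: seminorm_minus[OF seminorm] seminorm_smult[OF seminorm] P0_smult P0_monom)
  also have "\<dots> = \<delta> * M" using \<open>\<delta> > 0\<close> by simp
  also have "\<dots> < \<epsilon> / 2"
    using \<open>\<epsilon> > 0\<close> \<open>0 \<le> M\<close> by (simp add: \<delta>_def field_simps)
  finally have "\<pi> (q - p k) < \<epsilon>"
    using seminorm_diff_triangle[OF seminorm \<open>q \<in> P0\<close> pP0[of k] \<open>q' \<in> P0\<close>] k \<pi>_le_\<sigma>
    by linarith
  with \<open>K \<le> k\<close> show ?thesis by blast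
qed

lemma simultaneous_approximation:
  fixes p u v :: "nat \<Rightarrow> complex poly"
  assumes seminorm: "seminorm_on_P0 \<pi>"
    and pP0: "\<And>k. p k \<in> P0"
    and dense: "\<And>\<sigma> q \<epsilon>. seminorm_on_P0 \<sigma> \<Longrightarrow> q \<in> P0 \<Longrightarrow> \<epsilon> > 0 \<Longrightarrow>
                   \<exists>k. \<sigma> (q - p k) < \<epsilon>"
    and uP0: "\<And>k. u k \<in> P0" and vP0: "\<And>k. v k \<in> P0"
    and lim_u: "(\<lambda>k. \<pi> (u k - p k)) \<longlonglongrightarrow> 0"
    and lim_v: "(\<lambda>k. \<pi> (v k - p k)) \<longlonglongrightarrow> 0"
    and "q \<in> P0" and "\<epsilon> > 0"
  shows "\<exists>k. \<pi> (q - u k) < \<epsilon> \<and> \<pi> (q - v k) < \<epsilon>"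
proof -
  have "\<epsilon> / 2 > 0" using \<open>\<epsilon> > 0\<close> by simp
  then obtain K where K: "\<And>k. K \<le> k \<Longrightarrow> \<pi> (u k - p k) < \<epsilon> / 2 \<and> \<pi> (v k - p k) < \<epsilon> / 2"
    using eventually_conj[OF order_tendstoD(2)[OF lim_u] order_tendstoD(2)[OF lim_v]]
    unfolding eventually_sequentially by blast
  obtain k where "K \<le> k" and "\<pi> (q - p k) < \<epsilon> / 2"
    using universally_dense_tail[where p = p, OF seminorm pP0 dense \<open>q \<in> P0\<close> \<open>\<epsilon> / 2 > 0\<close>]
    by blast
  then have "\<pi> (q - w k) < \<epsilon>" if "w k \<in> P0" "\<pi> (w k - p k) < \<epsilon> / 2" for w
    using that seminorm_diff_triangle[OF seminorm \<open>q \<in> P0\<close> that(1) pP0[of k]]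
      seminorm_diff_commute[OF seminorm pP0[of k] that(1)] by simp
  with K[OF \<open>K \<le> k\<close>] uP0 vP0 show ?thesis by blast
qed

section \<open>A seminorm with a dense orbit of \<open>z(1+z)\<^sup>m\<close> is a norm\<close>

lemma dense_orbit_no_geometric_functional:
  fixes \<phi> :: "complex poly \<Rightarrow> complex"
  assumes seminorm: "seminorm_on_P0 \<pi>"
    and dense_orbit: "\<forall>q\<in>P0. \<forall>\<epsilon>>0. \<exists>m. \<pi> (q - [:0,1:] * [:1,1:] ^ m) < \<epsilon>"
    and lipschitz: "\<And>f g. f \<in> P0 \<Longrightarrow> g \<in> P0 \<Longrightarrow> cmod (\<phi> f - \<phi> g) \<le> C * \<pi> (f - g)"
    and "v \<noteq> 0"
    and \<phi>_linear: "\<And>t. \<phi> [:0, t:] = t * v"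
    and \<phi>_orbit: "\<And>m. \<phi> ([:0,1:] * [:1,1:] ^ m) = v * \<mu> ^ m"
  shows False
proof -
  \<comment> \<open>\<open>v \<mu>\<^sup>m\<close> stays in the closed disc of radius \<open>|v|\<close> or outside the open one, so it
      keeps distance at least \<open>|v|\<close> from \<open>w\<close>\<close>
  define w where "w = (if cmod \<mu> \<le> 1 then 2 * v else 0)"
  have far: "cmod v \<le> cmod (w - v * \<mu> ^ m)" for m
  proof (cases "cmod \<mu> \<le> 1")
    case True
    then have "cmod (v * \<mu> ^ m) \<le> cmod v"
      by (simp add: norm_mult norm_power mult_left_le power_le_one)
    with True norm_triangle_ineq2[of w "v * \<mu> ^ m"] show ?thesis by (simp add: w_def)
  next
    case False
    then show ?thesis by (simp add: w_def norm_mult norm_power mult_le_cancel_left1 one_le_power)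
  qed
  define q where "q = [:0, w / v:]"
  have "q \<in> P0" and "\<phi> q = w" using \<open>v \<noteq> 0\<close> by (simp_all add: q_def P0_def \<phi>_linear)
  define \<epsilon> where "\<epsilon> = cmod v / (\<bar>C\<bar> + 1)"
  have "\<epsilon> > 0" using \<open>v \<noteq> 0\<close> by (simp add: \<epsilon>_def add_pos_nonneg)
  then obtain m where m: "\<pi> (q - [:0,1:] * [:1,1:] ^ m) < \<epsilon>"
    using dense_orbit \<open>q \<in> P0\<close> by blast
  have orbit_P0: "[:0,1:] * [:1,1:] ^ m \<in> P0" by simp
  have "cmod v \<le> cmod (w - v * \<mu> ^ m)" by (rule far)
  also have "\<dots> \<le> C * \<pi> (q - [:0,1:] * [:1,1:] ^ m)"
    using lipschitz[OF \<open>q \<in> P0\<close> orbit_P0] unfolding \<open>\<phi> q = w\<close> \<phi>_orbit .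
  also have "\<dots> \<le> \<bar>C\<bar> * \<epsilon>"
    using m seminorm_nonneg[OF seminorm, of "q - [:0,1:] * [:1,1:] ^ m"] \<open>q \<in> P0\<close> orbit_P0
    by (intro order.trans[OF mult_right_mono mult_left_mono]) auto
  also have "\<dots> < cmod v"
    using \<open>v \<noteq> 0\<close> by (simp add: \<epsilon>_def field_simps)
  finally show False by simp
qed

lemma seminorm_pX_pos:
  assumes seminorm: "seminorm_on_P0 \<pi>" and submult: "submultiplicative_on_P0 \<pi>"
    and nonzero: "\<exists>q\<in>P0. \<pi> q \<noteq> 0"
  shows "\<pi> [:0,1:] > 0"
proof (rule ccontr)
  assume "\<not> \<pi> [:0,1:] > 0"
  then have "\<pi> [:0,1:] = 0" using seminorm_nonneg[OF seminorm, of "[:0,1:]"] by simp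
  have "\<pi> f = 0" if "f \<in> P0" for f
  proof -
    have "[:0,1:] dvd f" using that poly_eq_0_iff_dvd[of f 0] by (simp add: P0_def)
    then obtain g where "f = g * [:0,1:]" by (auto simp: mult.commute elim: dvdE)
    with seminorm_kernel_mult[OF seminorm submult _ \<open>\<pi> [:0,1:] = 0\<close>] show ?thesis by simp
  qed
  with nonzero show False by blast
qed

lemma P0_without_nonzero_roots_eq_monom:
  assumes "q \<in> P0" and "q \<noteq> 0" and no_roots: "\<And>\<xi>. \<xi> \<noteq> 0 \<Longrightarrow> poly q \<xi> \<noteq> 0"
  obtains c a where "c \<noteq> 0" and "1 \<le> a" and "q = monom c a"
proof -
  define a where "a = order 0 q"
  obtain r where qr: "q = [:0,1:] ^ a * r" and "\<not> [:0,1:] dvd r"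
    using order_decomp[OF \<open>q \<noteq> 0\<close>, of 0] unfolding a_def by auto
  have "poly r \<xi> \<noteq> 0" for \<xi>
  proof (cases "\<xi> = 0")
    case True
    then show ?thesis using \<open>\<not> [:0,1:] dvd r\<close> poly_eq_0_iff_dvd[of r 0] by simp
  next
    case False
    then show ?thesis using no_roots[OF False] by (auto simp: qr)
  qed
  then have "degree r = 0"
    using fundamental_theorem_of_algebra constant_degree by blast
  then obtain c where "r = [:c:]" by (meson degree_eq_zeroE)
  then have "q = monom c a"
    using qr by (simp add: monom_altdef mult.commute)
  moreover from this have "c \<noteq> 0" using \<open>q \<noteq> 0\<close> by auto
  moreover have "1 \<le> a"
    using \<open>q \<in> P0\<close> \<open>q \<noteq> 0\<close> by (simp add: a_def P0_def order_root Suc_le_eq)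
  ultimately show ?thesis using that by blast
qed

lemma kernel_root_bounded_eval:
  assumes seminorm: "seminorm_on_P0 \<pi>" and submult: "submultiplicative_on_P0 \<pi>"
    and "u \<in> P0" and "\<pi> u > 0" and kernel: "\<pi> ([:-\<xi>,1:] * u) = 0" and "f \<in> P0"
  shows "cmod (poly f \<xi>) \<le> \<pi> f"
proof -
  have "[:-\<xi>,1:] dvd f - [:poly f \<xi>:]" by (simp add: poly_eq_0_iff_dvd[symmetric])
  then obtain g where "f - [:poly f \<xi>:] = [:-\<xi>,1:] * g" by (auto elim: dvdE)
  then have f: "f = [:poly f \<xi>:] + [:-\<xi>,1:] * g" by (simp add: algebra_simps)
  have "smult (poly f \<xi>) u = f * u - g * ([:-\<xi>,1:] * u)"
    by (subst (2) f) (simp add: algebra_simps)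
  then have "cmod (poly f \<xi>) * \<pi> u \<le> \<pi> (f * u) + \<pi> (g * ([:-\<xi>,1:] * u))"
    using seminorm_smult[OF seminorm \<open>u \<in> P0\<close>] seminorm_diff[OF seminorm] \<open>f \<in> P0\<close> \<open>u \<in> P0\<close>
    by (metis P0_mult_left P0_mult_right)
  also have "\<dots> \<le> \<pi> f * \<pi> u"
    using seminorm_kernel_mult[OF seminorm submult _ kernel, of g] assms
    by (simp add: submultiplicative_on_P0_def)
  finally show ?thesis using \<open>\<pi> u > 0\<close> by simp
qed

lemma kernel_pX_power_bounded_coeff1:
  assumes seminorm: "seminorm_on_P0 \<pi>" and submult: "submultiplicative_on_P0 \<pi>"
    and kernel: "\<pi> ([:0,1:] ^ Suc (Suc b)) = 0" and "f \<in> P0"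
  shows "cmod (coeff f 1) * \<pi> ([:0,1:] ^ Suc b) \<le> \<pi> (f * [:0,1:] ^ b)"
proof -
  obtain a0 f' where f0: "f = pCons a0 f'" by (cases f)
  obtain a1 h where f': "f' = pCons a1 h" by (cases f')
  have f: "f = pCons 0 (pCons a1 h)" using \<open>f \<in> P0\<close> by (simp add: f0 f' P0_def)
  have f_times_pX_power: "f * [:0,1:] ^ b = smult a1 ([:0,1:] ^ Suc b) + h * [:0,1:] ^ Suc (Suc b)"
    by (simp add: f algebra_simps)
  have "cmod (coeff f 1) * \<pi> ([:0,1:] ^ Suc b) = \<pi> (smult a1 ([:0,1:] ^ Suc b))"
    using seminorm_smult[OF seminorm, of "[:0,1:] ^ Suc b" a1] by (simp add: f)
  also have "smult a1 ([:0,1:] ^ Suc b) = f * [:0,1:] ^ b - h * [:0,1:] ^ Suc (Suc b)"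
    using f_times_pX_power by (simp only: eq_diff_eq)
  also have "\<pi> \<dots> \<le> \<pi> (f * [:0,1:] ^ b) + \<pi> (h * [:0,1:] ^ Suc (Suc b))"
    using \<open>f \<in> P0\<close> by (intro seminorm_diff[OF seminorm]) (simp_all del: power_Suc)
  also have "\<pi> (h * [:0,1:] ^ Suc (Suc b)) = 0"
    using seminorm_kernel_mult[OF seminorm submult _ kernel] by (simp del: power_Suc)
  finally show ?thesis by simp
qed

lemma submultiplicative_mult_pX_power_le:
  assumes submult: "submultiplicative_on_P0 \<pi>"
  obtains K where "\<And>f. f \<in> P0 \<Longrightarrow> \<pi> (f * [:0,1:] ^ b) \<le> K * \<pi> f"
proof (cases "b = 0")
  case False
  then show ?thesis
    using that[of "\<pi> ([:0,1:] ^ b)"] submult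
    by (simp add: submultiplicative_on_P0_def mult.commute)
qed (use that[of 1] in simp)

lemma dense_orbit_imp_norm:
  assumes seminorm: "seminorm_on_P0 \<pi>" and submult: "submultiplicative_on_P0 \<pi>"
    and nonzero: "\<exists>q\<in>P0. \<pi> q \<noteq> 0"
    and dense_orbit: "\<forall>q\<in>P0. \<forall>\<epsilon>>0. \<exists>m. \<pi> (q - [:0,1:] * [:1,1:] ^ m) < \<epsilon>"
  shows "norm_on_P0 \<pi>"
  unfolding norm_on_P0_def
proof (intro conjI seminorm ballI impI; rule ccontr)
  fix q0 assume "q0 \<in> P0" "\<pi> q0 = 0" "q0 \<noteq> 0"
  then obtain q where q: "q \<in> P0" "q \<noteq> 0" "\<pi> q = 0"
    and least: "\<And>u. u \<in> P0 \<and> u \<noteq> 0 \<and> \<pi> u = 0 \<Longrightarrow> degree q \<le> degree u"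
    using ex_has_least_nat[of "\<lambda>u. u \<in> P0 \<and> u \<noteq> 0 \<and> \<pi> u = 0" q0 degree] by blast
  have minimal: "\<pi> u > 0" if "u \<in> P0" "u \<noteq> 0" "degree u < degree q" for u
    using least[of u] that seminorm_nonneg[OF seminorm \<open>u \<in> P0\<close>] by force
  note no_functional = dense_orbit_no_geometric_functional[OF seminorm dense_orbit]
  show False
  proof (cases "\<exists>\<xi>. \<xi> \<noteq> 0 \<and> poly q \<xi> = 0")
    case True
    then obtain \<xi> where "\<xi> \<noteq> 0" "poly q \<xi> = 0" by blast
    then obtain u where qu: "q = [:-\<xi>,1:] * u" by (auto simp: poly_eq_0_iff_dvd elim: dvdE)
    with q \<open>\<xi> \<noteq> 0\<close> have "u \<in> P0" "u \<noteq> 0" by (auto simp: P0_def)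
    moreover have "degree q = Suc (degree u)"
      unfolding qu using \<open>u \<noteq> 0\<close> by (subst degree_mult_eq) auto
    ultimately have "\<pi> u > 0" using minimal by simp
    have lipschitz: "cmod (poly f \<xi> - poly g \<xi>) \<le> 1 * \<pi> (f - g)" if "f \<in> P0" "g \<in> P0" for f g
      using kernel_root_bounded_eval[OF seminorm submult \<open>u \<in> P0\<close> \<open>\<pi> u > 0\<close>, of \<xi> "f - g"]
        q(3) that by (simp add: qu)
    show False
      by (rule no_functional[OF lipschitz \<open>\<xi> \<noteq> 0\<close>, of "1 + \<xi>"]) (simp_all add: poly_power)
  next
    case False
    then obtain c a where "c \<noteq> 0" "1 \<le> a" "q = monom c a"
      using P0_without_nonzero_roots_eq_monom[OF q(1,2)] by blast
    then have kernel: "\<pi> ([:0,1:] ^ a) = 0"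
      using q(3) seminorm_smult[OF seminorm P0_pX_power[OF \<open>1 \<le> a\<close>], of c]
      by (simp add: monom_altdef)
    have "a \<noteq> 1"
      using kernel seminorm_pX_pos[OF seminorm submult nonzero] by auto
    define b where "b = a - 2"
    have a: "a = Suc (Suc b)" using \<open>1 \<le> a\<close> \<open>a \<noteq> 1\<close> by (simp add: b_def)
    have "\<pi> ([:0,1:] ^ Suc b) > 0"
      by (rule minimal)
        (auto simp: \<open>q = monom c a\<close> a \<open>c \<noteq> 0\<close> degree_monom_eq degree_power_eq P0_def
          simp del: power_Suc)
    obtain K where K: "\<And>f. f \<in> P0 \<Longrightarrow> \<pi> (f * [:0,1:] ^ b) \<le> K * \<pi> f"
      using submultiplicative_mult_pX_power_le[OF submult] by blast
    have lipschitz: "cmod (coeff f 1 - coeff g 1) \<le> K / \<pi> ([:0,1:] ^ Suc b) * \<pi> (f - g)"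
      if "f \<in> P0" "g \<in> P0" for f g
      using kernel_pX_power_bounded_coeff1[OF seminorm submult kernel[unfolded a], of "f - g"]
        K[of "f - g"] \<open>\<pi> ([:0,1:] ^ Suc b) > 0\<close> that
      by (simp add: pos_le_divide_eq del: power_Suc)
    show False
      by (rule no_functional[OF lipschitz, of 1 1]) (simp_all add: poly_0_coeff_0[symmetric] poly_power)
  qed
qed

section \<open>The completion\<close>

lemma complex_scalar_cspan_subset_span:
  assumes "complex_scalar sc"
  shows "cspan sc S \<subseteq> span (S \<union> sc \<i> ` S)"
proof -
  have sc_real: "\<And>r x. sc (complex_of_real r) x = r *\<^sub>R x"
    and sc_add: "\<And>a b x. sc (a + b) x = sc a x + sc b x"
    and sc_assoc: "\<And>a b x. sc a (sc b x) = sc (a * b) x"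
    using assms by (simp_all add: complex_scalar_def)
  have "sc u x \<in> span (S \<union> sc \<i> ` S)" if "x \<in> S" for u x
  proof -
    have "sc u x = sc (complex_of_real (Re u)) x + sc (complex_of_real (Im u) * \<i>) x"
      using sc_add complex_eq[of u] by (metis mult.commute)
    also have "\<dots> = Re u *\<^sub>R x + Im u *\<^sub>R sc \<i> x"
      by (simp add: sc_real sc_assoc[symmetric])
    finally show ?thesis
      using that by (simp add: span_add span_scale span_base)
  qed
  then show ?thesis
    unfolding cspan_def by (auto intro!: span_sum)
qed

context
  fixes \<pi> :: "complex poly \<Rightarrow> real"
    and sc :: "complex \<Rightarrow> 'a::{real_normed_algebra,banach} \<Rightarrow> 'a"
    and j :: "complex poly \<Rightarrow> 'a"
  assumes completion: "is_completion \<pi> sc j"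
begin

lemma completion_add: "p \<in> P0 \<Longrightarrow> q \<in> P0 \<Longrightarrow> j (p + q) = j p + j q"
  and completion_mult: "p \<in> P0 \<Longrightarrow> q \<in> P0 \<Longrightarrow> j (p * q) = j p * j q"
  and completion_smult: "p \<in> P0 \<Longrightarrow> j (smult c p) = sc c (j p)"
  and completion_norm: "p \<in> P0 \<Longrightarrow> norm (j p) = \<pi> p"
  and completion_dense: "closure (j ` P0) = UNIV"
  and completion_complex_scalar: "complex_scalar sc"
  using completion by (simp_all add: is_completion_def)

lemma completion_scaleR: "p \<in> P0 \<Longrightarrow> j (smult (complex_of_real r) p) = r *\<^sub>R j p"
  using completion_smult completion_complex_scalar by (simp add: complex_scalar_def)

lemma completion_zero: "j 0 = 0"
  using completion_add[of 0 0] by simp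

lemma completion_diff: "p \<in> P0 \<Longrightarrow> q \<in> P0 \<Longrightarrow> j (p - q) = j p - j q"
  using completion_add[of "p - q" q] by simp

lemma completion_dist: "p \<in> P0 \<Longrightarrow> q \<in> P0 \<Longrightarrow> dist (j p) (j q) = \<pi> (p - q)"
  by (simp add: dist_norm completion_diff[symmetric] completion_norm)

lemma completion_sum: "(\<And>i. i \<in> I \<Longrightarrow> f i \<in> P0) \<Longrightarrow> j (\<Sum>i\<in>I. f i) = (\<Sum>i\<in>I. j (f i))"
proof (induction I rule: infinite_finite_induct)
  case (insert i I)
  then show ?case by (simp add: completion_add P0_sum)
qed (simp_all add: completion_zero)

lemma completion_inj_on:
  assumes "norm_on_P0 \<pi>"
  shows "inj_on j P0"
proof (rule inj_onI)
  fix p q assume "p \<in> P0" "q \<in> P0" "j p = j q"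
  then have "\<pi> (p - q) = 0" using completion_dist[of p q] by simp
  with assms \<open>p \<in> P0\<close> \<open>q \<in> P0\<close> have "p - q = 0"
    unfolding norm_on_P0_def by (meson P0_diff)
  then show "p = q" by simp
qed

lemma completion_pX_power: "j ([:0,1:] ^ Suc i) = ppow (j [:0,1:]) i"
proof (induction i)
  case (Suc i)
  have "j ([:0,1:] ^ Suc (Suc i)) = j ([:0,1:] * [:0,1:] ^ Suc i)"
    by (simp only: power_Suc)
  also have "\<dots> = j [:0,1:] * j ([:0,1:] ^ Suc i)"
    by (rule completion_mult) (simp_all del: power_Suc)
  finally show ?case using Suc by (simp add: ppow_def)
qed (simp add: ppow_def)

lemma completion_orbit: "j ([:0,1:] * [:1,1:] ^ i) = uorb (j [:0,1:]) i"
proof (induction i)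
  case (Suc i)
  let ?o = "[:0,1:] * [:1,1:] ^ i"
  have "[:0,1:] * [:1,1:] ^ Suc i = ?o + [:0,1:] * ?o"
    by (simp only: power_Suc) (simp add: algebra_simps)
  then have "j ([:0,1:] * [:1,1:] ^ Suc i) = j ?o + j [:0,1:] * j ?o"
    using completion_add[of ?o "[:0,1:] * ?o"] completion_mult[of "[:0,1:]" ?o] by simp
  then show ?case using Suc by (simp add: uorb_def)
qed (simp add: uorb_def)

lemma completion_dense_image:
  assumes approx: "\<And>q \<epsilon>. q \<in> P0 \<Longrightarrow> \<epsilon> > 0 \<Longrightarrow> \<exists>s\<in>S. \<pi> (q - s) < \<epsilon>"
    and "S \<subseteq> P0"
  shows "closure (j ` S) = UNIV"
proof -
  have "j q \<in> closure (j ` S)" if "q \<in> P0" for q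
    unfolding closure_approachable
  proof (intro allI impI)
    fix \<epsilon> :: real assume "\<epsilon> > 0"
    then obtain s where "s \<in> S" "\<pi> (q - s) < \<epsilon>" using approx \<open>q \<in> P0\<close> by blast
    moreover have "dist (j s) (j q) = \<pi> (q - s)"
      using completion_dist[of q s] \<open>q \<in> P0\<close> \<open>s \<in> S\<close> \<open>S \<subseteq> P0\<close> by (auto simp: dist_commute)
    ultimately show "\<exists>y\<in>j ` S. dist y (j q) < \<epsilon>" by (metis image_eqI)
  qed
  then have "j ` P0 \<subseteq> closure (j ` S)" by blast
  then have "closure (j ` P0) \<subseteq> closure (j ` S)" by (simp add: closure_minimal)
  with completion_dense show ?thesis by blast
qed

lemma completion_chaotic_pX:
  fixes c :: "nat \<Rightarrow> complex" and n m :: "nat \<Rightarrow> nat"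
  assumes approx: "\<And>q \<epsilon>. q \<in> P0 \<Longrightarrow> \<epsilon> > 0 \<Longrightarrow>
                      \<exists>k. \<pi> (q - monom (c k) (n k)) < \<epsilon> \<and> \<pi> (q - [:0,1:] * [:1,1:] ^ m k) < \<epsilon>"
    and npos: "\<And>k. 1 \<le> n k" and mpos: "\<And>k. 1 \<le> m k"
  shows "chaotic_element sc (j [:0,1:])"
proof -
  let ?a = "j [:0,1:]"
  have dense_superset: "closure B = UNIV" if "closure A = UNIV" and "A \<subseteq> B" for A B :: "'a set"
    using closure_mono[OF \<open>A \<subseteq> B\<close>] \<open>closure A = UNIV\<close> by blast
  have "\<exists>s\<in>range (\<lambda>k. monom (c k) (n k)). \<pi> (q - s) < \<epsilon>" if "q \<in> P0" "\<epsilon> > 0" for q \<epsilon>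
    using approx[OF that] by blast
  then have monoms_dense: "closure (j ` range (\<lambda>k. monom (c k) (n k))) = UNIV"
    by (rule completion_dense_image) (use npos in auto)
  have j_monom: "j (monom (c k) (n k)) = sc (c k) (ppow ?a (n k - 1))" for k
  proof -
    have "monom (c k) (n k) = smult (c k) ([:0,1:] ^ Suc (n k - 1))"
      using npos[of k] by (simp add: monom_altdef del: power_Suc)
    then show ?thesis by (simp add: completion_smult completion_pX_power del: power_Suc)
  qed
  have monoms_scaled_powers: "j ` range (\<lambda>k. monom (c k) (n k)) \<subseteq> {sc w (ppow ?a i) | w i. True}"
    unfolding image_image j_monom by blast
  have "\<exists>s\<in>range (\<lambda>k. [:0,1:] * [:1,1:] ^ m k). \<pi> (q - s) < \<epsilon>"
    if "q \<in> P0" "\<epsilon> > 0" for q \<epsilon>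
    using approx[OF that] by blast
  then have orbit_dense: "closure (j ` range (\<lambda>k. [:0,1:] * [:1,1:] ^ m k)) = UNIV"
    by (rule completion_dense_image) auto
  have orbit_uorb: "j ` range (\<lambda>k. [:0,1:] * [:1,1:] ^ m k) \<subseteq> {uorb ?a i | i. i \<ge> 1}"
    unfolding image_image completion_orbit using mpos by blast
  show ?thesis
    unfolding chaotic_element_def
    using dense_superset[OF monoms_dense monoms_scaled_powers] dense_superset[OF orbit_dense orbit_uorb]
    by blast
qed

lemma completion_monomials_independent:
  assumes "norm_on_P0 \<pi>" and "I \<subseteq> {1..}" and "finite I"
  shows "independent ((\<lambda>i. j (monom 1 i)) ` I)" and "inj_on (\<lambda>i. j (monom 1 i)) I"
proof -
  let ?e = "\<lambda>i. j (monom 1 i)"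
  have monom_P0: "monom c i \<in> P0" if "i \<in> I" for c i
    using that \<open>I \<subseteq> {1..}\<close> by auto
  show inj: "inj_on ?e I"
  proof (rule inj_onI)
    fix i k assume "i \<in> I" "k \<in> I" "?e i = ?e k"
    then have "monom (1::complex) i = monom 1 k"
      using completion_inj_on[OF \<open>norm_on_P0 \<pi>\<close>] monom_P0 by (auto dest: inj_onD)
    then show "i = k" by (simp add: monom_eq_iff')
  qed
  show "independent (?e ` I)"
  proof (rule independent_if_scalars_zero)
    fix r :: "'a \<Rightarrow> real" and x assume sum: "(\<Sum>x\<in>?e ` I. r x *\<^sub>R x) = 0" and "x \<in> ?e ` I"
    define P where "P = (\<Sum>i\<in>I. monom (complex_of_real (r (?e i))) i)"
    have "j P = (\<Sum>i\<in>I. r (?e i) *\<^sub>R ?e i)"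
      unfolding P_def using monom_P0
      by (simp add: completion_sum completion_scaleR[symmetric] smult_monom)
    also have "\<dots> = 0" using sum by (simp add: sum.reindex[OF inj])
    finally have "j P = j 0" by (simp add: completion_zero)
    moreover have "P \<in> P0" unfolding P_def using monom_P0 by (intro P0_sum)
    ultimately have "P = 0"
      using inj_onD[OF completion_inj_on[OF \<open>norm_on_P0 \<pi>\<close>]] by simp
    have "r (?e i) = 0" if "i \<in> I" for i
    proof -
      have "coeff P i = complex_of_real (r (?e i))"
        using that \<open>finite I\<close> by (simp add: P_def coeff_sum)
      with \<open>P = 0\<close> show ?thesis by simp
    qed
    with \<open>x \<in> ?e ` I\<close> show "r x = 0" by blast
  qed (use \<open>finite I\<close> in simp)
qed

lemma completion_infinite_dimensional:
  assumes "norm_on_P0 \<pi>"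
  shows "infinite_dimensional sc"
  unfolding infinite_dimensional_def
proof
  assume "\<exists>S. finite S \<and> cspan sc S = UNIV"
  then obtain S where "finite S" "cspan sc S = UNIV" by blast
  let ?T = "S \<union> sc \<i> ` S"
  let ?I = "{1..Suc (2 * card S)}"
  have "card ?T \<le> 2 * card S"
    using card_Un_le[of S "sc \<i> ` S"] card_image_le[OF \<open>finite S\<close>, of "sc \<i>"] by simp
  have "(\<lambda>i. j (monom 1 i)) ` ?I \<subseteq> span ?T"
    using complex_scalar_cspan_subset_span[OF completion_complex_scalar, of S]
      \<open>cspan sc S = UNIV\<close> by auto
  with completion_monomials_independent[OF assms, of ?I]
  have "card ((\<lambda>i. j (monom 1 i)) ` ?I) \<le> card ?T"
    using independent_span_bound[of ?T] \<open>finite S\<close> by auto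
  moreover have "card ((\<lambda>i. j (monom 1 i)) ` ?I) = Suc (2 * card S)"
    using completion_monomials_independent(2)[OF assms, of ?I] by (simp add: card_image)
  ultimately show False using \<open>card ?T \<le> 2 * card S\<close> by simp
qed

end

theorem lemma3p1:
  fixes \<pi> :: "complex poly \<Rightarrow> real"
    and p :: "nat \<Rightarrow> complex poly"
    and n m :: "nat \<Rightarrow> nat"
    and c :: "nat \<Rightarrow> complex"
  assumes semi: "seminorm_on_P0 \<pi>"
    and submult: "submultiplicative_on_P0 \<pi>"
    and nonzero: "\<exists>q\<in>P0. \<pi> q \<noteq> 0"
    and pP0: "\<And>k. p k \<in> P0"
    and dense: "\<And>\<sigma> q \<epsilon>. seminorm_on_P0 \<sigma> \<Longrightarrow> q \<in> P0 \<Longrightarrow> \<epsilon> > 0 \<Longrightarrow>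
                    \<exists>k. \<sigma> (q - p k) < \<epsilon>"
    and npos: "\<And>k. n k \<ge> 1"
    and mpos: "\<And>k. m k \<ge> 1"
    and lim1: "(\<lambda>k. \<pi> (monom (c k) (n k) - p k)) \<longlonglongrightarrow> 0"
    and lim2: "(\<lambda>k. \<pi> ([:0, 1:] * [:1, 1:] ^ m k - p k)) \<longlonglongrightarrow> 0"
  shows "norm_on_P0 \<pi> \<and>
         (\<forall>(sc :: complex \<Rightarrow> 'a::{real_normed_algebra,banach} \<Rightarrow> 'a) j.
            is_completion \<pi> sc j \<longrightarrow>
              infinite_dimensional sc \<and> chaotic_algebra sc \<and> chaotic_element sc (j [:0, 1:]))"
proof -
  have monom_P0: "\<And>k. monom (c k) (n k) \<in> P0" and orbit_P0: "\<And>k. [:0,1:] * [:1,1:] ^ m k \<in> P0"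
    using npos by simp_all
  have approx: "\<exists>k. \<pi> (q - monom (c k) (n k)) < \<epsilon> \<and> \<pi> (q - [:0,1:] * [:1,1:] ^ m k) < \<epsilon>"
    if "q \<in> P0" "\<epsilon> > 0" for q \<epsilon>
    using simultaneous_approximation[where p = p, OF semi pP0 dense monom_P0 orbit_P0 lim1 lim2 that] .
  then have norm: "norm_on_P0 \<pi>"
    by (intro dense_orbit_imp_norm[OF semi submult nonzero] ballI allI impI) blast
  have "infinite_dimensional sc \<and> chaotic_algebra sc \<and> chaotic_element sc (j [:0, 1:])"
    if "is_completion \<pi> sc j" for sc :: "complex \<Rightarrow> 'a \<Rightarrow> 'a" and j
    using completion_infinite_dimensional[OF that norm] completion_chaotic_pX[OF that approx npos mpos]
    by (auto simp: chaotic_algebra_def)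
  with norm show ?thesis by blast
qed

end
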